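(* Let $Q\subset\mathbb R^2$ be a polygonal set with center of mass $\overline{\mathbf x}_Q$, and let $\mathcal T^Q$ be a conforming triangulation of $Q$ into triangles, with set of triangles $\mathcal M^Q$ and set of boundary edges $\mathcal E^Q_{\rm ext}$ (edges lying on $\partial Q$). For each triangle $T$ let $\mathbf c_T$ be its circumcenter and $\overline{\mathbf x}_T$ its center of mass; for each edge $\sigma$ let $\mathbf a_1^\sigma,\mathbf a_2^\sigma$ be its endpoints. Then $$\sum_{T\in\mathcal M^Q}|T|(\mathbf c_T-\overline{\mathbf x}_T)=\sum_{\sigma\in\mathcal E^Q_{\rm ext}}|\sigma|\,\frac{|\mathbf a_1^\sigma-\overline{\mathbf x}_Q|^2+|\mathbf a_2^\sigma-\overline{\mathbf x}_Q|^2}{4}\,\mathbf n_{Q,\sigma},$$ where $\mathbf n_{Q,\sigma}$ is the unit outer normal to $Q$ on $\sigma$ and $|T|,|\sigma|$ are area and length.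
   Context: A conforming triangulation: triangles with pairwise disjoint interiors covering $Q$, any two of which intersect in empty set, a common vertex, or a common edge. *)

theory Defs
  imports "HOL-Analysis.Analysis"
begin

type_synonym pt = "real ^ 2"

definition is_triangle :: "pt set \<Rightarrow> bool" where
  "is_triangle T \<longleftrightarrow> (\<exists>a b c. \<not> collinear {a, b, c} \<and> T = convex hull {a, b, c})"

definition vertices :: "pt set \<Rightarrow> pt set" where
  "vertices T = {v. v extreme_point_of T}"

definition edges :: "pt set \<Rightarrow> pt set set" where
  "edges T = {closed_segment a b | a b. a \<in> vertices T \<and> b \<in> vertices T \<and> a \<noteq> b}"

definition endpoints :: "pt set \<Rightarrow> pt set" where
  "endpoints s = {v. v extreme_point_of s}"

definition seg_length :: "pt set \<Rightarrow> real" where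
  "seg_length s = diameter s"

definition area :: "pt set \<Rightarrow> real" where
  "area S = measure lebesgue S"

definition center_of_mass :: "pt set \<Rightarrow> pt" where
  "center_of_mass S = (1 / area S) *\<^sub>R integral S (\<lambda>x. x)"

definition circumcenter :: "pt set \<Rightarrow> pt" where
  "circumcenter T = (THE c. \<exists>r. \<forall>v \<in> vertices T. dist c v = r)"

definition conforming_triangulation :: "pt set set \<Rightarrow> pt set \<Rightarrow> bool" where
  "conforming_triangulation M Q \<longleftrightarrow>
     finite M \<and> (\<forall>T\<in>M. is_triangle T) \<and> \<Union>M = Q \<and>
     (\<forall>T1\<in>M. \<forall>T2\<in>M. T1 \<noteq> T2 \<longrightarrow> interior T1 \<inter> interior T2 = {}) \<and>
     (\<forall>T1\<in>M. \<forall>T2\<in>M. T1 \<noteq> T2 \<longrightarrow>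
        T1 \<inter> T2 = {} \<or>
        (\<exists>v. v \<in> vertices T1 \<and> v \<in> vertices T2 \<and> T1 \<inter> T2 = {v}) \<or>
        (\<exists>e. e \<in> edges T1 \<and> e \<in> edges T2 \<and> T1 \<inter> T2 = e))"

definition boundary_edges :: "pt set set \<Rightarrow> pt set \<Rightarrow> pt set set" where
  "boundary_edges M Q = {e. (\<exists>T\<in>M. e \<in> edges T) \<and> e \<subseteq> frontier Q}"

text \<open>Unit outer normal to Q on the boundary segment s: the unit vector orthogonal
  to s pointing out of Q (points just outside the midpoint of s in its direction
  are not in Q).\<close>
definition outer_normal :: "pt set \<Rightarrow> pt set \<Rightarrow> pt" where
  "outer_normal Q s = (THE n. norm n = 1 \<and>
      (\<forall>a\<in>s. \<forall>b\<in>s. n \<bullet> (a - b) = 0) \<and>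
      (\<exists>\<epsilon>>0. \<forall>t. 0 < t \<and> t < \<epsilon> \<longrightarrow>
          (1/2) *\<^sub>R (\<Sum>v\<in>endpoints s. v) + t *\<^sub>R n \<notin> Q))"

end

theory Submission
  imports Defs
begin

text \<open>For a single triangle \<open>T\<close> and any point \<open>x\<close>, the vector \<open>|T| (c\<^sub>T - x)\<close> equals the
  sum over the edges \<open>\<sigma>\<close> of \<open>T\<close> of \<open>|\<sigma>| (|a\<^sub>1 - x|\<^sup>2 + |a\<^sub>2 - x|\<^sup>2) / 4\<close> times the outer
  normal of \<open>T\<close> on \<open>\<sigma>\<close>; once the circumcenter is written out, this is a polynomial identity in
  the coordinates. Take \<open>x\<close> to be the center of mass of \<open>Q\<close> and sum over the triangulation.
  On the left, additivity of area and of the first moment gives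
  \<open>\<Sum> |T| x\<^sub>T = |Q| x\<^sub>Q = \<Sum> |T| x\<^sub>Q\<close>. On the right, an edge shared by two triangles
  separates them, so their outer normals on it are opposite and the two contributions cancel;
  an edge of only one triangle lies on the boundary of \<open>Q\<close>, and near its midpoint \<open>Q\<close>
  coincides with that triangle, whose outer normal is therefore that of \<open>Q\<close>.\<close>

section \<open>Barycentric coordinates in the plane\<close>

definition cross2 :: "pt \<Rightarrow> pt \<Rightarrow> real" where
  "cross2 p q = p$1 * q$2 - p$2 * q$1"

definition rot90 :: "pt \<Rightarrow> pt" where
  "rot90 v = (\<chi> i. if i = 1 then v$2 else - v$1)"

lemma rot90_component [simp]: "rot90 v $ 1 = v$2" "rot90 v $ 2 = - v$1"
  by (simp_all add: rot90_def)

lemma vec2_eq_iff: "(x::pt) = y \<longleftrightarrow> x$1 = y$1 \<and> x$2 = y$2"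
  by (simp add: vec_eq_iff forall_2)

lemma inner_vec2: "(u::pt) \<bullet> v = u$1 * v$1 + u$2 * v$2"
  by (simp add: inner_vec_def sum_2)

lemma norm_vec2_power2: "(norm (v::pt))\<^sup>2 = (v$1)\<^sup>2 + (v$2)\<^sup>2"
  by (simp only: power2_norm_eq_inner) (simp add: inner_vec2 power2_eq_square)

lemma norm_rot90 [simp]: "norm (rot90 v) = norm v"
  by (rule power2_eq_imp_eq) (simp_all add: norm_vec2_power2)

lemma inner_rot90_self [simp]: "rot90 v \<bullet> v = 0"
  by (simp add: inner_vec2)

lemma inner_rot90: "rot90 v \<bullet> w = cross2 w v"
  by (simp add: inner_vec2 cross2_def)

lemma cross2_self [simp]: "cross2 v v = 0"
  by (simp add: cross2_def)

lemma cross2_commute: "cross2 w v = - cross2 v w"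
  by (simp add: cross2_def)

lemma cross2_scaleR_left: "cross2 (k *\<^sub>R v) w = k * cross2 v w"
  by (simp add: cross2_def algebra_simps)

lemma cross2_rot90_self: "cross2 (rot90 v) v = (norm v)\<^sup>2"
  unfolding norm_vec2_power2 by (simp add: cross2_def power2_eq_square)

lemma cross2_eq_0_imp_parallel: "cross2 p q = 0 \<Longrightarrow> (norm p)\<^sup>2 *\<^sub>R q = (q \<bullet> p) *\<^sub>R p"
  unfolding vec2_eq_iff norm_vec2_power2 inner_vec2 cross2_def by (simp; algebra)

lemma cross2_nonzero_if_not_collinear:
  assumes "\<not> collinear {a, b, c}"
  shows "cross2 (b - a) (c - a) \<noteq> 0"
proof
  assume "cross2 (b - a) (c - a) = 0"
  then have parallel: "(norm (b - a))\<^sup>2 *\<^sub>R (c - a) = ((c - a) \<bullet> (b - a)) *\<^sub>R (b - a)"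
    by (rule cross2_eq_0_imp_parallel)
  have "collinear {0, b - a, c - a}"
  proof (cases "b = a")
    case False
    then have "c - a = inverse ((norm (b - a))\<^sup>2) *\<^sub>R ((norm (b - a))\<^sup>2 *\<^sub>R (c - a))"
      by simp
    also have "\<dots> = (inverse ((norm (b - a))\<^sup>2) * ((c - a) \<bullet> (b - a))) *\<^sub>R (b - a)"
      by (simp add: parallel)
    finally show ?thesis
      unfolding collinear_lemma by blast
  qed simp
  then have "collinear {b, a, c}"
    using collinear_3[of b a c] by simp
  with assms show False
    by (simp add: insert_commute)
qed

text \<open>The barycentric coordinate of \<open>y\<close> at the vertex \<open>a\<close> of the triangle \<open>a b c\<close>.\<close>
definition bary :: "pt \<Rightarrow> pt \<Rightarrow> pt \<Rightarrow> pt \<Rightarrow> real" where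
  "bary a b c y = cross2 (b - y) (c - y) / cross2 (b - a) (c - a)"

lemma bary_affine_combination:
  assumes "\<not> collinear {a, b, c}" and "u + v + w = 1" and "y = u *\<^sub>R a + v *\<^sub>R b + w *\<^sub>R c"
  shows "bary a b c y = u" "bary b c a y = v" "bary c a b y = w"
proof -
  have first: "bary a' b' c' y = u'"
    if "\<not> collinear {a', b', c'}" "u' + v' + w' = 1" "y = u' *\<^sub>R a' + v' *\<^sub>R b' + w' *\<^sub>R c'"
    for a' b' c' u' v' w'
  proof -
    have v': "v' = 1 - u' - w'"
      using that(2) by simp
    have "cross2 (b' - y) (c' - y) = u' * cross2 (b' - a') (c' - a')"
      by (simp add: cross2_def that(3) v') algebra
    with cross2_nonzero_if_not_collinear[OF that(1)] show ?thesis
      by (simp add: bary_def)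
  qed
  show "bary a b c y = u"
    by (rule first) (use assms in auto)
  show "bary b c a y = v"
    by (rule first[of b c a v w u]) (use assms in \<open>auto simp: insert_commute algebra_simps\<close>)
  show "bary c a b y = w"
    by (rule first[of c a b w u v]) (use assms in \<open>auto simp: insert_commute algebra_simps\<close>)
qed

lemma bary_vertex:
  assumes "\<not> collinear {a, b, c}"
  shows "bary a b c a = 1" "bary b c a a = 0" "bary c a b a = 0"
    "bary a b c b = 0" "bary b c a b = 1" "bary c a b b = 0"
    "bary a b c c = 0" "bary b c a c = 0" "bary c a b c = 1"
  using bary_affine_combination[OF assms, of 1 0 0] bary_affine_combination[OF assms, of 0 1 0]
    bary_affine_combination[OF assms, of 0 0 1]
  by simp_all

lemma bary_combination:
  assumes "\<not> collinear {a, b, c}"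
  shows "bary a b c y + bary b c a y + bary c a b y = 1"
    and "y = bary a b c y *\<^sub>R a + bary b c a y *\<^sub>R b + bary c a b y *\<^sub>R c"
proof -
  define D where "D = cross2 (b - a) (c - a)"
  have D: "D \<noteq> 0"
    using cross2_nonzero_if_not_collinear[OF assms] by (simp add: D_def)
  have rotate: "cross2 (c - b) (a - b) = D" "cross2 (a - c) (b - c) = D"
    by (simp_all add: D_def cross2_def algebra_simps)
  have "cross2 (b - y) (c - y) + cross2 (c - y) (a - y) + cross2 (a - y) (b - y) = D"
    by (simp add: D_def cross2_def algebra_simps)
  then show "bary a b c y + bary b c a y + bary c a b y = 1"
    using D unfolding bary_def rotate D_def[symmetric] by (simp add: add_divide_distrib[symmetric])
  have "cross2 (b - y) (c - y) *\<^sub>R a + cross2 (c - y) (a - y) *\<^sub>R b + cross2 (a - y) (b - y) *\<^sub>R c = D *\<^sub>R y"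
    unfolding D_def cross2_def vec2_eq_iff by simp algebra
  then have "y = inverse D *\<^sub>R
      (cross2 (b - y) (c - y) *\<^sub>R a + cross2 (c - y) (a - y) *\<^sub>R b + cross2 (a - y) (b - y) *\<^sub>R c)"
    using D by simp
  then show "y = bary a b c y *\<^sub>R a + bary b c a y *\<^sub>R b + bary c a b y *\<^sub>R c"
    unfolding bary_def rotate D_def[symmetric] by (simp add: scaleR_add_right divide_inverse_commute)
qed

lemma mem_convex_hull_3_iff_bary:
  assumes "\<not> collinear {a, b, c}"
  shows "y \<in> convex hull {a, b, c} \<longleftrightarrow> 0 \<le> bary a b c y \<and> 0 \<le> bary b c a y \<and> 0 \<le> bary c a b y"
proof
  assume "y \<in> convex hull {a, b, c}"
  then obtain u v w where "0 \<le> u" "0 \<le> v" "0 \<le> w" "u + v + w = 1" "y = u *\<^sub>R a + v *\<^sub>R b + w *\<^sub>R c"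
    unfolding convex_hull_3 by blast
  then show "0 \<le> bary a b c y \<and> 0 \<le> bary b c a y \<and> 0 \<le> bary c a b y"
    using bary_affine_combination[OF assms] by metis
next
  assume "0 \<le> bary a b c y \<and> 0 \<le> bary b c a y \<and> 0 \<le> bary c a b y"
  then show "y \<in> convex hull {a, b, c}"
    unfolding convex_hull_3 using bary_combination[OF assms, of y] by blast
qed

lemma bary_closed_segment:
  assumes "\<not> collinear {a, b, c}" and "y \<in> closed_segment a b"
  shows "bary c a b y = 0" "0 \<le> bary a b c y" "0 \<le> bary b c a y"
proof -
  obtain u where "0 \<le> u" "u \<le> 1" "y = (1 - u) *\<^sub>R a + u *\<^sub>R b + 0 *\<^sub>R c"
    using assms(2) by (auto simp: in_segment)
  with bary_affine_combination[OF assms(1) _ this(3)] show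
    "bary c a b y = 0" "0 \<le> bary a b c y" "0 \<le> bary b c a y"
    by simp_all
qed

lemma bary_open_segment:
  assumes "\<not> collinear {a, b, c}" and "y \<in> open_segment a b"
  shows "bary c a b y = 0" "0 < bary a b c y" "0 < bary b c a y"
proof -
  obtain u where "0 < u" "u < 1" "y = (1 - u) *\<^sub>R a + u *\<^sub>R b + 0 *\<^sub>R c"
    using assms(2) by (auto simp: in_segment)
  with bary_affine_combination[OF assms(1) _ this(3)] show
    "bary c a b y = 0" "0 < bary a b c y" "0 < bary b c a y"
    by simp_all
qed

lemma continuous_on_bary: "continuous_on UNIV (bary a b c)"
  unfolding bary_def[abs_def] cross2_def divide_inverse by (intro continuous_intros)

lemma open_bary_pos: "open {y. 0 < bary a b c y}"
  using open_Collect_less[OF continuous_on_const continuous_on_bary] by simp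


section \<open>Triangles\<close>

lemma not_collinear_distinct:
  assumes "\<not> collinear {a, b, c}"
  shows "a \<noteq> b" "b \<noteq> c" "a \<noteq> c"
  using assms by (auto simp: insert_commute)

lemma vertices_triangle:
  assumes "\<not> collinear {a, b, c}"
  shows "vertices (convex hull {a, b, c}) = {a, b, c}"
  using assms unfolding vertices_def collinear_3_eq_affine_dependent
  using extreme_point_of_convex_hull_affine_independent by blast

lemma edges_triangle:
  assumes "\<not> collinear {a, b, c}"
  shows "edges (convex hull {a, b, c}) = {closed_segment a b, closed_segment b c, closed_segment c a}"
  using not_collinear_distinct[OF assms]
  unfolding edges_def vertices_triangle[OF assms] by (auto simp: closed_segment_commute)

lemma edges_triangle_distinct:
  fixes a b c :: "'a::euclidean_space"
  assumes "\<not> collinear {a, b, c}"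
  shows "closed_segment a b \<noteq> closed_segment b c" "closed_segment b c \<noteq> closed_segment c a"
    "closed_segment c a \<noteq> closed_segment a b"
  using not_collinear_distinct[OF assms] unfolding closed_segment_eq by (auto simp: doubleton_eq_iff)

lemma endpoints_closed_segment: "endpoints (closed_segment a b) = {a, b}"
  unfolding endpoints_def extreme_point_of_segment by auto

lemma seg_length_closed_segment: "seg_length (closed_segment a b) = dist a b"
proof -
  have "diameter (closed_segment a b) \<le> dist a b"
  proof (rule diameter_le)
    fix x y assume x: "x \<in> closed_segment a b" and y: "y \<in> closed_segment a b"
    have "norm (x - y) \<le> norm (x - a) \<or> norm (x - y) \<le> norm (x - b)"
      using segment_furthest_le[OF y] .
    with segment_bound[OF x] show "norm (x - y) \<le> dist a b"
      by (auto simp: dist_norm norm_minus_commute)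
  qed simp
  moreover have "dist a b \<le> diameter (closed_segment a b)"
    by (rule diameter_bounded_bound) (auto intro: compact_imp_bounded)
  ultimately show ?thesis
    unfolding seg_length_def by simp
qed

lemma is_triangle_compact: "is_triangle T \<Longrightarrow> compact T"
  by (auto simp: is_triangle_def intro: compact_convex_hull)

lemma is_triangle_convex: "is_triangle T \<Longrightarrow> convex T"
  by (auto simp: is_triangle_def)

lemma integrable_on_id_compact:
  fixes T :: "'a::euclidean_space set"
  assumes "compact T"
  shows "(\<lambda>x. x) integrable_on T"
proof -
  have "integrable lborel (\<lambda>x. indicator T x *\<^sub>R x)"
    by (rule borel_integrable_compact[OF assms continuous_on_id])
  then have "(\<lambda>x. indicator T x *\<^sub>R x) integrable_on UNIV"
    by (rule integrable_on_lborel)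
  moreover have "(\<lambda>x. indicator T x *\<^sub>R x) = (\<lambda>x. if x \<in> T then x else 0)"
    by (auto simp: indicator_def)
  ultimately show ?thesis
    using integrable_restrict_UNIV by metis
qed

lemma edge_of_triangleE:
  assumes "is_triangle T" and "\<sigma> \<in> edges T"
  obtains a b c where "\<not> collinear {a, b, c}" "T = convex hull {a, b, c}" "\<sigma> = closed_segment a b"
proof -
  obtain p q r where nc: "\<not> collinear {p, q, r}" and T: "T = convex hull {p, q, r}"
    using assms(1) unfolding is_triangle_def by blast
  then have "\<sigma> \<in> {closed_segment p q, closed_segment q r, closed_segment r p}"
    using assms(2) edges_triangle by blast
  then show ?thesis
    using that[of p q r] that[of q r p] that[of r p q] nc T by (auto simp: insert_commute)
qed

lemma triangle_with_edgeE:
  assumes "is_triangle T" and "closed_segment a b \<in> edges T" and "a \<noteq> b"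
  obtains d where "\<not> collinear {a, b, d}" "T = convex hull {a, b, d}"
proof -
  obtain p q r where pqr: "\<not> collinear {p, q, r}" "T = convex hull {p, q, r}"
    and "closed_segment a b = closed_segment p q"
    using edge_of_triangleE[OF assms(1,2)] by metis
  then have "{p, q} = {a, b}"
    by simp
  with pqr that show ?thesis
    by (auto simp: doubleton_eq_iff insert_commute)
qed

lemma area_triangle: "area (convex hull {a, b, c}) = \<bar>cross2 (b - a) (c - a)\<bar> / 2"
proof -
  have "convex hull {a, b, c} \<in> sets lborel"
    using compact_convex_hull[of "{a, b, c}"] by (simp add: borel_closed compact_imp_closed)
  then have "area (convex hull {a, b, c}) = measure lborel (convex hull {a, b, c})"
    unfolding area_def by simp
  also have "\<dots> = \<bar>cross2 (b - a) (c - a)\<bar> / 2"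
    by (simp add: content_triangle cross2_def abs_minus_commute algebra_simps)
  finally show ?thesis .
qed

lemma area_pos_if_is_triangle: "is_triangle T \<Longrightarrow> 0 < area T"
  by (auto simp: is_triangle_def area_triangle dest: cross2_nonzero_if_not_collinear)

lemma dist_eq_iff_inner:
  fixes a b z :: "'a::real_inner"
  shows "dist z b = dist z a \<longleftrightarrow> 2 * ((z - a) \<bullet> (b - a)) = (norm (b - a))\<^sup>2"
proof -
  have "(dist z b)\<^sup>2 = (dist z a)\<^sup>2 - 2 * ((z - a) \<bullet> (b - a)) + (norm (b - a))\<^sup>2"
    unfolding dist_norm power2_norm_eq_inner by (simp add: algebra_simps inner_commute)
  moreover have "dist z b = dist z a \<longleftrightarrow> (dist z b)\<^sup>2 = (dist z a)\<^sup>2"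
    by (simp add: power2_eq_iff_nonneg)
  ultimately show ?thesis
    by auto
qed

lemma vec2_eq_if_inner_eq:
  assumes "cross2 v w \<noteq> 0" and "u \<bullet> v = u' \<bullet> v" and "u \<bullet> w = u' \<bullet> w"
  shows "u = u'"
proof -
  have "(u$1 - u'$1) * v$1 + (u$2 - u'$2) * v$2 = 0" "(u$1 - u'$1) * w$1 + (u$2 - u'$2) * w$2 = 0"
    using assms(2,3) by (simp_all add: inner_vec2 algebra_simps)
  then have "(u$1 - u'$1) * cross2 v w = 0" "(u$2 - u'$2) * cross2 v w = 0"
    unfolding cross2_def by algebra+
  with assms(1) show ?thesis
    by (simp add: vec2_eq_iff)
qed

definition circumcenter_of :: "pt \<Rightarrow> pt \<Rightarrow> pt \<Rightarrow> pt" where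
  "circumcenter_of a b c = a + (1 / (2 * cross2 (b - a) (c - a))) *\<^sub>R
     ((norm (b - a))\<^sup>2 *\<^sub>R rot90 (c - a) - (norm (c - a))\<^sup>2 *\<^sub>R rot90 (b - a))"

lemma circumcenter_triangle:
  assumes "\<not> collinear {a, b, c}"
  shows "circumcenter (convex hull {a, b, c}) = circumcenter_of a b c"
proof -
  define D where "D = cross2 (b - a) (c - a)"
  have D: "D \<noteq> 0"
    using cross2_nonzero_if_not_collinear[OF assms] by (simp add: D_def)
  define u where "u = circumcenter_of a b c - a"
  have u_eq: "u = (1 / (2 * D)) *\<^sub>R ((norm (b - a))\<^sup>2 *\<^sub>R rot90 (c - a) - (norm (c - a))\<^sup>2 *\<^sub>R rot90 (b - a))"
    by (simp add: u_def circumcenter_of_def D_def)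
  have "cross2 (c - a) (b - a) = - D"
    by (simp add: D_def cross2_commute[of "c - a"])
  then have u: "2 * (u \<bullet> (b - a)) = (norm (b - a))\<^sup>2" "2 * (u \<bullet> (c - a)) = (norm (c - a))\<^sup>2"
    using D unfolding u_eq by (simp_all add: inner_diff_left inner_rot90 flip: D_def)
  have equidistant: "dist z b = dist z a \<and> dist z c = dist z a \<longleftrightarrow> z - a = u" for z
  proof
    assume "dist z b = dist z a \<and> dist z c = dist z a"
    then have "(z - a) \<bullet> (b - a) = u \<bullet> (b - a)" "(z - a) \<bullet> (c - a) = u \<bullet> (c - a)"
      using u unfolding dist_eq_iff_inner by simp_all
    with D show "z - a = u"
      by (intro vec2_eq_if_inner_eq[of "b - a" "c - a"]) (simp_all add: D_def)
  qed (use u in \<open>simp add: dist_eq_iff_inner\<close>)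
  show ?thesis
    unfolding circumcenter_def vertices_triangle[OF assms]
  proof (rule the_equality)
    show "\<exists>r. \<forall>v\<in>{a, b, c}. dist (circumcenter_of a b c) v = r"
      using equidistant[of "circumcenter_of a b c"] by (auto simp: u_def)
  next
    fix z assume "\<exists>r. \<forall>v\<in>{a, b, c}. dist z v = r"
    then show "z = circumcenter_of a b c"
      using equidistant[of z] by (auto simp: u_def)
  qed
qed


section \<open>Outer normals of triangle edges\<close>

text \<open>The unit normal to the edge \<open>a b\<close> of the triangle \<open>a b c\<close> that points away from \<open>c\<close>.\<close>
definition edge_normal :: "pt \<Rightarrow> pt \<Rightarrow> pt \<Rightarrow> pt" where
  "edge_normal a b c = (sgn (cross2 (b - a) (c - a)) / norm (b - a)) *\<^sub>R rot90 (b - a)"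

lemma norm_edge_normal:
  assumes "\<not> collinear {a, b, c}"
  shows "norm (edge_normal a b c) = 1"
  using cross2_nonzero_if_not_collinear[OF assms] not_collinear_distinct[OF assms]
  by (simp add: edge_normal_def abs_sgn)

lemma edge_normal_orthogonal:
  assumes "x \<in> closed_segment a b" and "y \<in> closed_segment a b"
  shows "edge_normal a b c \<bullet> (x - y) = 0"
proof -
  obtain u v where x: "x = (1 - u) *\<^sub>R a + u *\<^sub>R b" and y: "y = (1 - v) *\<^sub>R a + v *\<^sub>R b"
    using assms by (auto simp: in_segment)
  have "x - y = (u - v) *\<^sub>R (b - a)"
    unfolding x y by (simp add: algebra_simps)
  then show ?thesis
    by (simp add: edge_normal_def)
qed

lemma edge_normal_opposite_sides:
  assumes "cross2 (b - a) (c - a) * cross2 (b - a) (d - a) < 0"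
  shows "edge_normal a b d = - edge_normal a b c"
  using assms by (auto simp: edge_normal_def mult_less_0_iff)

lemma edge_normal_same_side:
  assumes "cross2 (b - a) (c - a) * cross2 (b - a) (d - a) > 0"
  shows "edge_normal a b d = edge_normal a b c"
  using assms by (auto simp: edge_normal_def zero_less_mult_iff)

lemma unit_normal_cases:
  assumes "\<not> collinear {a, b, c}" and "norm n = 1" and "n \<bullet> (b - a) = 0"
  shows "n = edge_normal a b c \<or> n = - edge_normal a b c"
proof -
  define v where "v = b - a"
  have "v \<noteq> 0"
    using not_collinear_distinct[OF assms(1)] by (simp add: v_def)
  define k where "k = (n \<bullet> rot90 v) / (norm v)\<^sup>2"
  have "cross2 v (rot90 v) \<noteq> 0"
    using \<open>v \<noteq> 0\<close> cross2_rot90_self[of v] by (simp add: cross2_commute[of v])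
  then have n: "n = k *\<^sub>R rot90 v"
    using assms(3) \<open>v \<noteq> 0\<close>
    by (intro vec2_eq_if_inner_eq[of v "rot90 v"]) (simp_all add: k_def v_def dot_square_norm)
  then have "\<bar>k\<bar> = 1 / norm v"
    using assms(2) \<open>v \<noteq> 0\<close> by (simp add: field_simps)
  then have "k = 1 / norm v \<or> k = - (1 / norm v)"
    by (auto simp: abs_if split: if_split_asm)
  moreover have "sgn (cross2 v (c - a)) = 1 \<or> sgn (cross2 v (c - a)) = -1"
    using cross2_nonzero_if_not_collinear[OF assms(1)] by (simp add: v_def sgn_if)
  ultimately show ?thesis
    unfolding n edge_normal_def v_def[symmetric] by (auto simp: abs_if)
qed

lemma bary_add_edge_normal:
  assumes "\<not> collinear {a, b, c}"
  shows "bary c a b (y + t *\<^sub>R edge_normal a b c)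
    = bary c a b y - t * (norm (b - a) / \<bar>cross2 (b - a) (c - a)\<bar>)"
proof -
  define D where "D = cross2 (b - a) (c - a)"
  have D: "D \<noteq> 0"
    using cross2_nonzero_if_not_collinear[OF assms] by (simp add: D_def)
  define n where "n = edge_normal a b c"
  have bary_D: "bary c a b z = cross2 (a - z) (b - z) / D" for z
    by (simp add: bary_def D_def cross2_def algebra_simps)
  have "cross2 (a - (y + t *\<^sub>R n)) (b - (y + t *\<^sub>R n)) = cross2 (a - y) (b - y) - t * cross2 n (b - a)"
    by (simp add: cross2_def algebra_simps)
  also have "cross2 n (b - a) = sgn D * norm (b - a)"
    using not_collinear_distinct[OF assms]
    by (simp add: n_def edge_normal_def cross2_scaleR_left cross2_rot90_self power2_eq_square flip: D_def)
  finally show ?thesis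
    using D unfolding bary_D n_def[symmetric] D_def[symmetric]
    by (auto simp: diff_divide_distrib sgn_if abs_if)
qed

lemma edge_normal_outside:
  assumes "\<not> collinear {a, b, c}" and "p \<in> closed_segment a b" and "0 < t"
  shows "p + t *\<^sub>R edge_normal a b c \<notin> convex hull {a, b, c}"
proof
  assume "p + t *\<^sub>R edge_normal a b c \<in> convex hull {a, b, c}"
  then have "0 \<le> bary c a b (p + t *\<^sub>R edge_normal a b c)"
    using mem_convex_hull_3_iff_bary[OF assms(1)] by blast
  moreover have "0 < t * (norm (b - a) / \<bar>cross2 (b - a) (c - a)\<bar>)"
    using assms(3) not_collinear_distinct[OF assms(1)] cross2_nonzero_if_not_collinear[OF assms(1)]
    by simp
  moreover have "bary c a b (p + t *\<^sub>R edge_normal a b c) = - (t * (norm (b - a) / \<bar>cross2 (b - a) (c - a)\<bar>))"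
    using bary_add_edge_normal[OF assms(1), of p t] bary_closed_segment(1)[OF assms(1,2)] by linarith
  ultimately show False
    by linarith
qed

lemma open_segment_neighbourhood:
  assumes "\<not> collinear {a, b, c}" and "p \<in> open_segment a b"
  obtains S where "open S" "p \<in> S" "\<And>y. y \<in> S \<Longrightarrow> 0 \<le> bary c a b y \<Longrightarrow> y \<in> convex hull {a, b, c}"
proof
  let ?S = "{y. 0 < bary a b c y} \<inter> {y. 0 < bary b c a y}"
  show "open ?S"
    by (intro open_Int open_bary_pos)
  show "p \<in> ?S"
    using bary_open_segment[OF assms] by simp
  show "y \<in> convex hull {a, b, c}" if "y \<in> ?S" "0 \<le> bary c a b y" for y
    using that by (simp add: mem_convex_hull_3_iff_bary[OF assms(1)])
qed

lemma eventually_interior_along_edge_normal: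
  assumes "\<not> collinear {a, b, c}" and "p \<in> open_segment a b"
  shows "\<forall>\<^sub>F t in at_right 0. p - t *\<^sub>R edge_normal a b c \<in> interior (convex hull {a, b, c})"
proof -
  define n where "n = edge_normal a b c"
  obtain S where S: "open S" "p \<in> S" "\<And>y. y \<in> S \<Longrightarrow> 0 \<le> bary c a b y \<Longrightarrow> y \<in> convex hull {a, b, c}"
    using open_segment_neighbourhood[OF assms] by blast
  define S' where "S' = S \<inter> {y. 0 < bary c a b y}"
  have "S' \<subseteq> interior (convex hull {a, b, c})"
    using S by (intro interior_maximal) (auto simp: S'_def intro: open_Int open_bary_pos)
  moreover have "((\<lambda>t. p - t *\<^sub>R n) \<longlongrightarrow> p) (at_right 0)"
    by (auto intro!: tendsto_eq_intros)
  then have "\<forall>\<^sub>F t in at_right 0. p - t *\<^sub>R n \<in> S"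
    using S(1,2) by (rule topological_tendstoD)
  moreover have "\<forall>\<^sub>F t in at_right 0. 0 < bary c a b (p - t *\<^sub>R n)"
    using eventually_at_right_less[of 0]
  proof (rule eventually_mono)
    fix t :: real assume "0 < t"
    with bary_add_edge_normal[OF assms(1), of p "- t"] bary_open_segment(1)[OF assms]
      not_collinear_distinct[OF assms(1)] cross2_nonzero_if_not_collinear[OF assms(1)]
    show "0 < bary c a b (p - t *\<^sub>R n)"
      by (simp add: n_def)
  qed
  ultimately show ?thesis
    unfolding n_def[symmetric] S'_def by (auto elim: eventually_elim2)
qed

lemma outer_normal_eq_edge_normal:
  assumes nc: "\<not> collinear {a, b, c}" and "convex hull {a, b, c} \<subseteq> Q"
    and S: "open S" "midpoint a b \<in> S" "S \<inter> Q \<subseteq> convex hull {a, b, c}"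
  shows "outer_normal Q (closed_segment a b) = edge_normal a b c"
proof -
  define m where "m = midpoint a b"
  define n where "n = edge_normal a b c"
  have "a \<noteq> b"
    using not_collinear_distinct[OF nc] by simp
  then have m: "m \<in> open_segment a b"
    by (simp add: m_def)
  have mid: "(1/2) *\<^sub>R (\<Sum>v\<in>endpoints (closed_segment a b). v) = m"
    using \<open>a \<noteq> b\<close> by (simp add: m_def midpoint_def endpoints_closed_segment)
  have unit: "norm n = 1"
    using norm_edge_normal[OF nc] by (simp add: n_def)
  show ?thesis
    unfolding outer_normal_def mid n_def[symmetric]
  proof (rule the_equality, intro conjI)
    show "norm n = 1"
      by (rule unit)
    show "\<forall>x\<in>closed_segment a b. \<forall>y\<in>closed_segment a b. n \<bullet> (x - y) = 0"
      by (simp add: n_def edge_normal_orthogonal)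
    obtain e where e: "0 < e" "ball m e \<subseteq> S"
      using S(1,2) open_contains_ball_eq unfolding m_def by blast
    have "m + t *\<^sub>R n \<notin> Q" if "0 < t" "t < e" for t
    proof -
      have "m + t *\<^sub>R n \<in> S"
        using that e unit by (auto simp: dist_norm)
      moreover have "m + t *\<^sub>R n \<notin> convex hull {a, b, c}"
        using edge_normal_outside[OF nc _ that(1)] m by (simp add: n_def open_closed_segment)
      ultimately show ?thesis
        using S(3) by blast
    qed
    with e(1) show "\<exists>\<epsilon>>0. \<forall>t. 0 < t \<and> t < \<epsilon> \<longrightarrow> m + t *\<^sub>R n \<notin> Q"
      by blast
  next
    fix n' assume n': "norm n' = 1 \<and> (\<forall>x\<in>closed_segment a b. \<forall>y\<in>closed_segment a b. n' \<bullet> (x - y) = 0) \<and>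
      (\<exists>\<epsilon>>0. \<forall>t. 0 < t \<and> t < \<epsilon> \<longrightarrow> m + t *\<^sub>R n' \<notin> Q)"
    then obtain e where e: "0 < e" "\<And>t. 0 < t \<Longrightarrow> t < e \<Longrightarrow> m + t *\<^sub>R n' \<notin> Q"
      by blast
    have "n' = n \<or> n' = - n"
      using n' unit_normal_cases[OF nc, of n'] by (simp add: n_def)
    moreover have "n' \<noteq> - n"
    proof
      assume "n' = - n"
      have "\<forall>\<^sub>F t in at_right 0. (0 < t \<and> t < e) \<and> m - t *\<^sub>R n \<in> interior (convex hull {a, b, c})"
        using eventually_interior_along_edge_normal[OF nc m] e(1)
        by (intro eventually_conj) (auto simp: n_def eventually_at_right_field)
      then obtain t where "0 < t" "t < e" "m - t *\<^sub>R n \<in> interior (convex hull {a, b, c})"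
        using eventually_happens'[OF trivial_limit_at_right_real] by blast
      then have "m - t *\<^sub>R n \<in> Q"
        using assms(2) interior_subset by blast
      with e(2)[OF \<open>0 < t\<close> \<open>t < e\<close>] \<open>n' = - n\<close> show False
        by simp
    qed
    ultimately show "n' = n"
      by blast
  qed
qed

lemma outer_normal_triangle:
  assumes "\<not> collinear {a, b, c}"
  shows "outer_normal (convex hull {a, b, c}) (closed_segment a b) = edge_normal a b c"
  using assms by (intro outer_normal_eq_edge_normal[of _ _ _ _ UNIV]) auto


section \<open>The identity for a single triangle\<close>

definition edge_moment :: "pt \<Rightarrow> pt set \<Rightarrow> real" where
  "edge_moment x \<sigma> = seg_length \<sigma> * (\<Sum>v\<in>endpoints \<sigma>. (norm (v - x))\<^sup>2) / 4"

lemma edge_moment_scaleR_edge_normal: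
  assumes "\<not> collinear {a, b, c}"
  shows "edge_moment x (closed_segment a b) *\<^sub>R edge_normal a b c
    = (sgn (cross2 (b - a) (c - a)) * ((norm (a - x))\<^sup>2 + (norm (b - x))\<^sup>2) / 4) *\<^sub>R rot90 (b - a)"
  using not_collinear_distinct[OF assms]
  by (simp add: edge_moment_def edge_normal_def seg_length_closed_segment endpoints_closed_segment
      dist_norm norm_minus_commute[of a b])

lemma cross2_scaleR_circumcenter_of:
  assumes "cross2 (b - a) (c - a) \<noteq> 0"
  shows "cross2 (b - a) (c - a) *\<^sub>R (circumcenter_of a b c - x) = (1/2) *\<^sub>R
     (((norm (a - x))\<^sup>2 + (norm (b - x))\<^sup>2) *\<^sub>R rot90 (b - a)
      + ((norm (b - x))\<^sup>2 + (norm (c - x))\<^sup>2) *\<^sub>R rot90 (c - b)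
      + ((norm (c - x))\<^sup>2 + (norm (a - x))\<^sup>2) *\<^sub>R rot90 (a - c))"
proof -
  have "cross2 (b - a) (c - a) *\<^sub>R (circumcenter_of a b c - x) = cross2 (b - a) (c - a) *\<^sub>R (a - x)
     + (1/2) *\<^sub>R ((norm (b - a))\<^sup>2 *\<^sub>R rot90 (c - a) - (norm (c - a))\<^sup>2 *\<^sub>R rot90 (b - a))"
  proof -
    have "cross2 (b - a) (c - a) * (1 / (2 * cross2 (b - a) (c - a))) = 1/2"
      using assms by simp
    with assms show ?thesis
      by (simp add: circumcenter_of_def scaleR_add_right scaleR_diff_right)
  qed
  also have "\<dots> = (1/2) *\<^sub>R
     (((norm (a - x))\<^sup>2 + (norm (b - x))\<^sup>2) *\<^sub>R rot90 (b - a)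
      + ((norm (b - x))\<^sup>2 + (norm (c - x))\<^sup>2) *\<^sub>R rot90 (c - b)
      + ((norm (c - x))\<^sup>2 + (norm (a - x))\<^sup>2) *\<^sub>R rot90 (a - c))"
    unfolding vec2_eq_iff by (simp add: norm_vec2_power2 cross2_def; algebra)
  finally show ?thesis .
qed

lemma triangle_identity:
  assumes "is_triangle T"
  shows "area T *\<^sub>R (circumcenter T - x) = (\<Sum>\<sigma>\<in>edges T. edge_moment x \<sigma> *\<^sub>R outer_normal T \<sigma>)"
proof -
  obtain a b c where abc: "\<not> collinear {a, b, c}" and T: "T = convex hull {a, b, c}"
    using assms unfolding is_triangle_def by blast
  define D where "D = cross2 (b - a) (c - a)"
  have D: "D \<noteq> 0"
    using cross2_nonzero_if_not_collinear[OF abc] by (simp add: D_def)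
  have bca: "\<not> collinear {b, c, a}" "T = convex hull {b, c, a}" "cross2 (c - b) (a - b) = D"
    and cab: "\<not> collinear {c, a, b}" "T = convex hull {c, a, b}" "cross2 (a - c) (b - c) = D"
    using abc by (simp_all add: T D_def insert_commute cross2_def algebra_simps)
  define f where "f \<sigma> = edge_moment x \<sigma> *\<^sub>R outer_normal T \<sigma>" for \<sigma>
  have "(\<Sum>\<sigma>\<in>edges T. f \<sigma>) = f (closed_segment a b) + f (closed_segment b c) + f (closed_segment c a)"
    using edges_triangle_distinct[OF abc] by (simp add: T edges_triangle[OF abc] algebra_simps)
  also have "\<dots> = (sgn D / 4) *\<^sub>R
     (((norm (a - x))\<^sup>2 + (norm (b - x))\<^sup>2) *\<^sub>R rot90 (b - a)
      + ((norm (b - x))\<^sup>2 + (norm (c - x))\<^sup>2) *\<^sub>R rot90 (c - b)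
      + ((norm (c - x))\<^sup>2 + (norm (a - x))\<^sup>2) *\<^sub>R rot90 (a - c))"
    unfolding f_def
      outer_normal_triangle[OF abc, folded T] outer_normal_triangle[OF bca(1), folded bca(2)]
      outer_normal_triangle[OF cab(1), folded cab(2)]
      edge_moment_scaleR_edge_normal[OF abc] edge_moment_scaleR_edge_normal[OF bca(1)]
      edge_moment_scaleR_edge_normal[OF cab(1)] bca(3) cab(3) D_def[symmetric]
    by (simp add: scaleR_add_right)
  also have "\<dots> = (sgn D / 2) *\<^sub>R (D *\<^sub>R (circumcenter_of a b c - x))"
    using cross2_scaleR_circumcenter_of[where a = a and b = b and c = c] D by (simp add: D_def)
  also have "\<dots> = area T *\<^sub>R (circumcenter T - x)"
    by (simp add: T area_triangle circumcenter_triangle[OF abc] abs_sgn flip: D_def)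
  finally show ?thesis
    unfolding f_def ..
qed


section \<open>Conforming triangulations\<close>

context
  fixes M :: "pt set set" and Q :: "pt set"
  assumes triangulation: "conforming_triangulation M Q"
begin

lemma triangulation_finite: "finite M"
  using triangulation by (simp add: conforming_triangulation_def)

lemma triangulation_is_triangle: "T \<in> M \<Longrightarrow> is_triangle T"
  using triangulation by (simp add: conforming_triangulation_def)

lemma triangulation_Union: "\<Union>M = Q"
  using triangulation by (simp add: conforming_triangulation_def)

lemma triangulation_interior_disjoint:
  "T \<in> M \<Longrightarrow> T' \<in> M \<Longrightarrow> T \<noteq> T' \<Longrightarrow> interior T \<inter> interior T' = {}"
  using triangulation unfolding conforming_triangulation_def by blast

lemma triangulation_meet: "T \<in> M \<Longrightarrow> T' \<in> M \<Longrightarrow> T \<noteq> T' \<Longrightarrow>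
    T \<inter> T' = {} \<or> (\<exists>v. v \<in> vertices T \<and> v \<in> vertices T' \<and> T \<inter> T' = {v}) \<or>
    (\<exists>e. e \<in> edges T \<and> e \<in> edges T' \<and> T \<inter> T' = e)"
  using triangulation by (simp add: conforming_triangulation_def)

lemma triangle_subset_triangulated: "T \<in> M \<Longrightarrow> T \<subseteq> Q"
  using triangulation_Union by blast

lemma edge_of_other_triangle:
  assumes T: "convex hull {a, b, c} \<in> M" and abc: "\<not> collinear {a, b, c}"
    and T': "T' \<in> M" "T' \<noteq> convex hull {a, b, c}"
    and p: "p \<in> open_segment a b" "p \<in> T'"
  shows "closed_segment a b \<in> edges T'"
proof -
  have bary_p: "bary c a b p = 0" "0 < bary a b c p" "0 < bary b c a p"
    using bary_open_segment[OF abc p(1)] by auto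
  have "p \<in> convex hull {a, b, c}"
    using p(1) open_closed_segment segments_subset_convex_hull(1) by blast
  with p(2) have meet: "p \<in> convex hull {a, b, c} \<inter> T'"
    by blast
  consider (vertex) v where "v \<in> {a, b, c}" "convex hull {a, b, c} \<inter> T' = {v}"
    | (edge) e where "e \<in> {closed_segment a b, closed_segment b c, closed_segment c a}" "e \<in> edges T'"
        "convex hull {a, b, c} \<inter> T' = e"
    using triangulation_meet[OF T T'(1) not_sym[OF T'(2)]] meet
    unfolding vertices_triangle[OF abc] edges_triangle[OF abc] by (elim disjE exE conjE; blast)
  then show ?thesis
  proof cases
    case vertex
    then show ?thesis
      using meet bary_p bary_vertex[OF abc] by auto
  next
    case edge
    have "p \<notin> closed_segment b c" "p \<notin> closed_segment c a"
      using bary_p bary_closed_segment(1)[of b c a p] bary_closed_segment(1)[of c a b p] abc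
      by (auto simp: insert_commute)
    with edge meet show ?thesis
      by auto
  qed
qed

lemma unshared_edge_neighbourhood:
  assumes T: "convex hull {a, b, c} \<in> M" and abc: "\<not> collinear {a, b, c}"
    and unshared: "\<And>T'. T' \<in> M \<Longrightarrow> closed_segment a b \<in> edges T' \<Longrightarrow> T' = convex hull {a, b, c}"
    and p: "p \<in> open_segment a b"
  obtains S where "open S" "p \<in> S" "S \<inter> Q \<subseteq> convex hull {a, b, c}"
proof
  let ?S = "\<Inter>T'\<in>M - {convex hull {a, b, c}}. - T'"
  show "open ?S"
    using triangulation_finite triangulation_is_triangle
    by (intro open_INT) (auto intro: compact_imp_closed is_triangle_compact)
  show "p \<in> ?S"
    using edge_of_other_triangle[OF T abc _ _ p] unshared by blast
  show "?S \<inter> Q \<subseteq> convex hull {a, b, c}"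
    using triangulation_Union by blast
qed

lemma shared_edge_opposite_sides:
  assumes T: "convex hull {a, b, c} \<in> M" and abc: "\<not> collinear {a, b, c}"
    and T': "convex hull {a, b, d} \<in> M" and abd: "\<not> collinear {a, b, d}"
    and ne: "convex hull {a, b, d} \<noteq> convex hull {a, b, c}"
  shows "cross2 (b - a) (c - a) * cross2 (b - a) (d - a) < 0"
proof (rule ccontr)
  assume "\<not> ?thesis"
  moreover have "cross2 (b - a) (c - a) \<noteq> 0" "cross2 (b - a) (d - a) \<noteq> 0"
    using cross2_nonzero_if_not_collinear[OF abc] cross2_nonzero_if_not_collinear[OF abd] by auto
  ultimately have "cross2 (b - a) (c - a) * cross2 (b - a) (d - a) > 0"
    by (simp add: linorder_not_less order_le_less)
  then have same: "edge_normal a b d = edge_normal a b c"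
    by (rule edge_normal_same_side)
  have m: "midpoint a b \<in> open_segment a b"
    using not_collinear_distinct[OF abc] by simp
  have "\<forall>\<^sub>F t in at_right 0. midpoint a b - t *\<^sub>R edge_normal a b c
      \<in> interior (convex hull {a, b, c}) \<inter> interior (convex hull {a, b, d})"
    using eventually_conj[OF eventually_interior_along_edge_normal[OF abc m]
        eventually_interior_along_edge_normal[OF abd m]]
    unfolding same by simp
  then have "interior (convex hull {a, b, c}) \<inter> interior (convex hull {a, b, d}) \<noteq> {}"
    using eventually_happens'[OF trivial_limit_at_right_real] by blast
  with triangulation_interior_disjoint[OF T T'] ne show False
    by auto
qed

lemma shared_edge_interior:
  assumes T: "convex hull {a, b, c} \<in> M" and abc: "\<not> collinear {a, b, c}"
    and T': "convex hull {a, b, d} \<in> M" and abd: "\<not> collinear {a, b, d}"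
    and ne: "convex hull {a, b, d} \<noteq> convex hull {a, b, c}"
    and p: "p \<in> open_segment a b"
  shows "p \<in> interior Q"
proof -
  obtain S where S: "open S" "p \<in> S" "\<And>y. y \<in> S \<Longrightarrow> 0 \<le> bary c a b y \<Longrightarrow> y \<in> convex hull {a, b, c}"
    using open_segment_neighbourhood[OF abc p] by blast
  obtain S' where S': "open S'" "p \<in> S'" "\<And>y. y \<in> S' \<Longrightarrow> 0 \<le> bary d a b y \<Longrightarrow> y \<in> convex hull {a, b, d}"
    using open_segment_neighbourhood[OF abd p] by blast
  have "S \<inter> S' \<subseteq> Q"
  proof
    fix y assume y: "y \<in> S \<inter> S'"
    have "bary c a b y = cross2 (a - y) (b - y) / cross2 (b - a) (c - a)"
      "bary d a b y = cross2 (a - y) (b - y) / cross2 (b - a) (d - a)"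
      by (simp_all add: bary_def cross2_def algebra_simps)
    \<comment> \<open>the two denominators have opposite signs\<close>
    then have "0 \<le> bary c a b y \<or> 0 \<le> bary d a b y"
      using shared_edge_opposite_sides[OF T abc T' abd ne]
      by (cases "0 \<le> cross2 (a - y) (b - y)") (auto simp: mult_less_0_iff zero_le_divide_iff)
    then show "y \<in> Q"
      using y S(3) S'(3) triangle_subset_triangulated[OF T] triangle_subset_triangulated[OF T'] by blast
  qed
  with S(1,2) S'(1,2) show ?thesis
    by (meson interiorI open_Int IntI)
qed

lemma unshared_edge_frontier:
  assumes T: "convex hull {a, b, c} \<in> M" and abc: "\<not> collinear {a, b, c}"
    and unshared: "\<And>T'. T' \<in> M \<Longrightarrow> closed_segment a b \<in> edges T' \<Longrightarrow> T' = convex hull {a, b, c}"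
  shows "closed_segment a b \<subseteq> frontier Q"
proof -
  have "open_segment a b \<subseteq> frontier Q"
  proof
    fix p assume p: "p \<in> open_segment a b"
    then have "p \<in> Q"
      using triangle_subset_triangulated[OF T] open_closed_segment segments_subset_convex_hull(1) by blast
    obtain S where S: "open S" "p \<in> S" "S \<inter> Q \<subseteq> convex hull {a, b, c}"
      using unshared_edge_neighbourhood[OF T abc unshared p] by blast
    have "p \<notin> interior Q"
    proof
      assume "p \<in> interior Q"
      then obtain e where e: "0 < e" "ball p e \<subseteq> interior Q \<inter> S"
        using S(1,2) open_contains_ball_eq[of "interior Q \<inter> S"] by blast
      define y where "y = p + (e / 2) *\<^sub>R edge_normal a b c"
      have "y \<in> ball p e"
        using e(1) norm_edge_normal[OF abc] by (simp add: y_def dist_norm)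
      then have "y \<in> convex hull {a, b, c}"
        using e(2) S(3) interior_subset by blast
      moreover have "y \<notin> convex hull {a, b, c}"
        unfolding y_def using e(1) p by (intro edge_normal_outside[OF abc]) (simp_all add: open_closed_segment)
      ultimately show False
        by blast
    qed
    with \<open>p \<in> Q\<close> show "p \<in> frontier Q"
      using closure_subset by (auto simp: frontier_def)
  qed
  then have "closure (open_segment a b) \<subseteq> frontier Q"
    by (intro closure_minimal) auto
  then show ?thesis
    using not_collinear_distinct[OF abc] by simp
qed

lemma shared_edgeE:
  assumes T: "convex hull {a, b, c} \<in> M" and abc: "\<not> collinear {a, b, c}"
    and T': "T' \<in> M" "T' \<noteq> convex hull {a, b, c}" "closed_segment a b \<in> edges T'"
  obtains d where "\<not> collinear {a, b, d}" "convex hull {a, b, d} \<in> M"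
    "convex hull {a, b, d} \<noteq> convex hull {a, b, c}"
    "{T\<in>M. closed_segment a b \<in> edges T} = {convex hull {a, b, c}, convex hull {a, b, d}}"
proof -
  have ab: "a \<noteq> b"
    using not_collinear_distinct[OF abc] by simp
  obtain d where abd: "\<not> collinear {a, b, d}" "T' = convex hull {a, b, d}"
    using triangle_with_edgeE[OF triangulation_is_triangle[OF T'(1)] T'(3) ab] by blast
  have T_abd: "convex hull {a, b, d} \<in> M" and ne: "convex hull {a, b, d} \<noteq> convex hull {a, b, c}"
    using T' abd(2) by auto
  have "T'' \<in> {convex hull {a, b, c}, convex hull {a, b, d}}"
    if T'': "T'' \<in> M" "closed_segment a b \<in> edges T''" for T''
  proof (rule ccontr)
    assume other: "T'' \<notin> {convex hull {a, b, c}, convex hull {a, b, d}}"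
    obtain e where abe: "\<not> collinear {a, b, e}" "T'' = convex hull {a, b, e}"
      using triangle_with_edgeE[OF triangulation_is_triangle[OF T''(1)] T''(2) ab] by blast
    have T_abe: "convex hull {a, b, e} \<in> M"
      using T''(1) abe(2) by simp
    \<comment> \<open>\<open>c\<close>, \<open>d\<close> and \<open>e\<close> would lie pairwise on opposite sides of the line \<open>a b\<close>\<close>
    have "cross2 (b - a) (c - a) * cross2 (b - a) (d - a) < 0"
      "cross2 (b - a) (c - a) * cross2 (b - a) (e - a) < 0"
      "cross2 (b - a) (d - a) * cross2 (b - a) (e - a) < 0"
      using shared_edge_opposite_sides[OF T abc T_abd abd(1) ne]
        shared_edge_opposite_sides[OF T abc T_abe abe(1)] shared_edge_opposite_sides[OF T_abd abd(1) T_abe abe(1)]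
        other abe(2) by auto
    then show False
      by (auto simp: mult_less_0_iff)
  qed
  moreover have "convex hull {a, b, c} \<in> {T\<in>M. closed_segment a b \<in> edges T}"
    using T abc by (simp add: edges_triangle)
  moreover have "convex hull {a, b, d} \<in> {T\<in>M. closed_segment a b \<in> edges T}"
    using T' abd(2) by simp
  ultimately show ?thesis
    using that[OF abd(1) T_abd ne] by blast
qed

lemma sum_outer_normal_edge:
  assumes T: "convex hull {a, b, c} \<in> M" and abc: "\<not> collinear {a, b, c}"
  shows "(\<Sum>T'\<in>{T'\<in>M. closed_segment a b \<in> edges T'}. outer_normal T' (closed_segment a b)) =
    (if closed_segment a b \<subseteq> frontier Q then outer_normal Q (closed_segment a b) else 0)"
proof -
  have m: "midpoint a b \<in> open_segment a b"
    using not_collinear_distinct[OF abc] by simp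
  show ?thesis
  proof (cases "\<forall>T'\<in>M. closed_segment a b \<in> edges T' \<longrightarrow> T' = convex hull {a, b, c}")
    case True
    then have unshared: "\<And>T'. T' \<in> M \<Longrightarrow> closed_segment a b \<in> edges T' \<Longrightarrow> T' = convex hull {a, b, c}"
      by blast
    have "closed_segment a b \<in> edges (convex hull {a, b, c})"
      using edges_triangle[OF abc] by simp
    with T unshared have "{T'\<in>M. closed_segment a b \<in> edges T'} = {convex hull {a, b, c}}"
      by blast
    moreover have "closed_segment a b \<subseteq> frontier Q"
      by (rule unshared_edge_frontier[OF T abc unshared])
    moreover obtain S where "open S" "midpoint a b \<in> S" "S \<inter> Q \<subseteq> convex hull {a, b, c}"
      using unshared_edge_neighbourhood[OF T abc unshared m] by blast
    then have "outer_normal Q (closed_segment a b) = edge_normal a b c"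
      by (rule outer_normal_eq_edge_normal[OF abc triangle_subset_triangulated[OF T]])
    ultimately show ?thesis
      by (simp add: outer_normal_triangle[OF abc])
  next
    case False
    then obtain T' where "T' \<in> M" "T' \<noteq> convex hull {a, b, c}" "closed_segment a b \<in> edges T'"
      by blast
    then obtain d where abd: "\<not> collinear {a, b, d}" "convex hull {a, b, d} \<in> M"
      and ne: "convex hull {a, b, d} \<noteq> convex hull {a, b, c}"
      and sharing: "{T\<in>M. closed_segment a b \<in> edges T} = {convex hull {a, b, c}, convex hull {a, b, d}}"
      by (rule shared_edgeE[OF T abc])
    have "midpoint a b \<in> interior Q"
      by (rule shared_edge_interior[OF T abc abd(2,1) ne m])
    moreover have "midpoint a b \<in> closed_segment a b"
      using m open_closed_segment by blast
    ultimately have "\<not> closed_segment a b \<subseteq> frontier Q"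
      unfolding frontier_def by blast
    moreover have "edge_normal a b d = - edge_normal a b c"
      using shared_edge_opposite_sides[OF T abc abd(2,1) ne] by (rule edge_normal_opposite_sides)
    ultimately show ?thesis
      unfolding sharing using ne outer_normal_triangle[OF abc] outer_normal_triangle[OF abd(1)] by simp
  qed
qed

lemma sum_edges_outer_normal:
  "(\<Sum>T\<in>M. \<Sum>\<sigma>\<in>edges T. f \<sigma> *\<^sub>R outer_normal T \<sigma>) =
   (\<Sum>\<sigma>\<in>boundary_edges M Q. f \<sigma> *\<^sub>R outer_normal Q \<sigma>)"
proof -
  define E where "E = \<Union>(edges ` M)"
  have "finite (edges T)" if "T \<in> M" for T
    using triangulation_is_triangle[OF that] by (auto simp: is_triangle_def edges_triangle)
  then have "finite E"
    using triangulation_finite by (simp add: E_def)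
  have "(\<Sum>T\<in>M. \<Sum>\<sigma>\<in>edges T. f \<sigma> *\<^sub>R outer_normal T \<sigma>)
      = (\<Sum>T\<in>M. \<Sum>\<sigma>\<in>{\<sigma>\<in>E. \<sigma> \<in> edges T}. f \<sigma> *\<^sub>R outer_normal T \<sigma>)"
  proof (rule sum.cong[OF refl])
    fix T assume "T \<in> M"
    then have "{\<sigma>\<in>E. \<sigma> \<in> edges T} = edges T"
      by (auto simp: E_def)
    then show "(\<Sum>\<sigma>\<in>edges T. f \<sigma> *\<^sub>R outer_normal T \<sigma>) = (\<Sum>\<sigma>\<in>{\<sigma>\<in>E. \<sigma> \<in> edges T}. f \<sigma> *\<^sub>R outer_normal T \<sigma>)"
      by simp
  qed
  also have "\<dots> = (\<Sum>\<sigma>\<in>E. f \<sigma> *\<^sub>R (\<Sum>T\<in>{T\<in>M. \<sigma> \<in> edges T}. outer_normal T \<sigma>))"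
    unfolding sum.swap_restrict[OF triangulation_finite \<open>finite E\<close>] by (simp add: scaleR_sum_right)
  also have "\<dots> = (\<Sum>\<sigma>\<in>E. if \<sigma> \<subseteq> frontier Q then f \<sigma> *\<^sub>R outer_normal Q \<sigma> else 0)"
  proof (rule sum.cong[OF refl])
    fix \<sigma> assume "\<sigma> \<in> E"
    then obtain T where "T \<in> M" "\<sigma> \<in> edges T"
      by (auto simp: E_def)
    then obtain a b c where "\<not> collinear {a, b, c}" "convex hull {a, b, c} \<in> M" "\<sigma> = closed_segment a b"
      using edge_of_triangleE[OF triangulation_is_triangle] by metis
    from sum_outer_normal_edge[OF this(2,1)] this(3)
    show "f \<sigma> *\<^sub>R (\<Sum>T\<in>{T\<in>M. \<sigma> \<in> edges T}. outer_normal T \<sigma>) =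
        (if \<sigma> \<subseteq> frontier Q then f \<sigma> *\<^sub>R outer_normal Q \<sigma> else 0)"
      by simp
  qed
  also have "\<dots> = (\<Sum>\<sigma>\<in>{\<sigma>\<in>E. \<sigma> \<subseteq> frontier Q}. f \<sigma> *\<^sub>R outer_normal Q \<sigma>)"
    by (rule sum.inter_filter[OF \<open>finite E\<close>, symmetric])
  also have "{\<sigma>\<in>E. \<sigma> \<subseteq> frontier Q} = boundary_edges M Q"
    unfolding E_def boundary_edges_def by blast
  finally show ?thesis .
qed

lemma negligible_triangle_Int:
  assumes "T \<in> M" "T' \<in> M" "T \<noteq> T'"
  shows "negligible (T \<inter> T')"
proof (rule negligible_subset)
  have "closed T" "closed T'"
    using assms(1,2) by (auto intro: compact_imp_closed is_triangle_compact triangulation_is_triangle)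
  with triangulation_interior_disjoint[OF assms] show "T \<inter> T' \<subseteq> frontier T \<union> frontier T'"
    by (auto simp: frontier_def)
  show "negligible (frontier T \<union> frontier T')"
    using assms(1,2)
    by (intro negligible_Un negligible_convex_frontier is_triangle_convex triangulation_is_triangle)
qed

lemma area_triangulated: "area Q = (\<Sum>T\<in>M. area T)"
proof -
  have "measure lebesgue (\<Union>M) = (\<Sum>T\<in>M. measure lebesgue T)"
    using triangulation_finite negligible_triangle_Int
    by (intro measure_negligible_finite_Union)
      (auto simp: pairwise_def intro: lmeasurable_compact is_triangle_compact triangulation_is_triangle)
  then show ?thesis
    unfolding area_def triangulation_Union .
qed

lemma integral_triangulated: "integral Q (\<lambda>x. x) = (\<Sum>T\<in>M. integral T (\<lambda>x. x))"
proof -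
  have "((\<lambda>x. x) has_integral (\<Sum>T\<in>M. integral T (\<lambda>x. x))) (\<Union>M)"
    using triangulation_finite negligible_triangle_Int
    by (intro has_integral_Union)
      (auto simp: pairwise_def intro: integrable_integral integrable_on_id_compact is_triangle_compact
        triangulation_is_triangle)
  then show ?thesis
    unfolding triangulation_Union by (rule integral_unique)
qed

lemma sum_area_scaleR_center_of_mass:
  "(\<Sum>T\<in>M. area T *\<^sub>R center_of_mass T) = area Q *\<^sub>R center_of_mass Q"
proof -
  have "area S *\<^sub>R center_of_mass S = integral S (\<lambda>x. x)" if "area S \<noteq> 0" for S
    using that by (simp add: center_of_mass_def)
  moreover have "area T \<noteq> 0" if "T \<in> M" for T
    using area_pos_if_is_triangle[OF triangulation_is_triangle[OF that]] by simp
  moreover have "area Q \<noteq> 0" if "M \<noteq> {}"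
  proof -
    have "0 < (\<Sum>T\<in>M. area T)"
      by (intro sum_pos[OF triangulation_finite that] area_pos_if_is_triangle triangulation_is_triangle)
    then show ?thesis
      by (simp add: area_triangulated)
  qed
  ultimately show ?thesis
    using triangulation_Union by (cases "M = {}") (auto simp: integral_triangulated area_def)
qed

end

theorem mainTheorem12:
  fixes M :: "(real ^ 2) set set" and Q :: "(real ^ 2) set"
  assumes "conforming_triangulation M Q"
  shows "(\<Sum>T\<in>M. area T *\<^sub>R (circumcenter T - center_of_mass T)) =
         (\<Sum>\<sigma>\<in>boundary_edges M Q.
            (seg_length \<sigma> *
              (\<Sum>a\<in>endpoints \<sigma>. (norm (a - center_of_mass Q))\<^sup>2) / 4)
            *\<^sub>R outer_normal Q \<sigma>)"
proof -
  define x where "x = center_of_mass Q"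
  have "(\<Sum>T\<in>M. area T *\<^sub>R (circumcenter T - center_of_mass T))
      = (\<Sum>T\<in>M. area T *\<^sub>R (circumcenter T - x))
        + ((\<Sum>T\<in>M. area T) *\<^sub>R x - (\<Sum>T\<in>M. area T *\<^sub>R center_of_mass T))"
    by (simp add: scaleR_diff_right sum_subtractf scaleR_sum_left)
  also have "(\<Sum>T\<in>M. area T) *\<^sub>R x - (\<Sum>T\<in>M. area T *\<^sub>R center_of_mass T) = 0"
    using area_triangulated[OF assms] sum_area_scaleR_center_of_mass[OF assms] by (simp add: x_def)
  also have "(\<Sum>T\<in>M. area T *\<^sub>R (circumcenter T - x))
      = (\<Sum>T\<in>M. \<Sum>\<sigma>\<in>edges T. edge_moment x \<sigma> *\<^sub>R outer_normal T \<sigma>)"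
    using triangle_identity triangulation_is_triangle[OF assms] by (intro sum.cong) auto
  also have "\<dots> = (\<Sum>\<sigma>\<in>boundary_edges M Q. edge_moment x \<sigma> *\<^sub>R outer_normal Q \<sigma>)"
    by (rule sum_edges_outer_normal[OF assms])
  finally show ?thesis
    by (simp add: edge_moment_def x_def)
qed

end
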